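(* Let $\mathbb{F}$ be a field of characteristic not equal to $2$, $d \ge 1$, and $\ell\in\mathbb{F}$ nonzero. If there exist points $v_0,\dots,v_d\in\mathbb{F}^d$ with $\|v_i-v_j\| = \ell$ for all $i\ne j$ (an equilateral $d$-simplex of sidelength $\ell$), then $(d+1)\left(\frac{\ell}{2}\right)^d$ is a square in $\mathbb{F}$. If moreover $d$ is even, then $d+1$ is a square in $\mathbb{F}$.
   Context: For $x,y\in\mathbb{F}^d$, $\|x-y\| = \sum_{i=1}^d (x_i-y_i)^2\in\mathbb{F}$. *)

theory Defs
  imports Main
begin

definition sqdist :: "nat \<Rightarrow> (nat \<Rightarrow> 'a::comm_ring_1) \<Rightarrow> (nat \<Rightarrow> 'a) \<Rightarrow> 'a" where
  "sqdist d x y = (\<Sum>i<d. (x i - y i)^2)"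

definition is_square :: "'a::comm_semiring_1 \<Rightarrow> bool" where
  "is_square a \<longleftrightarrow> (\<exists>s. a = s^2)"

end

theory Submission
  imports Defs "Jordan_Normal_Form.Determinant"
begin

text \<open>With \<open>w\<^sub>i = v\<^sub>i - v\<^sub>0\<close>, polarization turns the pairwise distances into the Gram
  matrix \<open>W W\<^sup>T = (\<ell>/2)(I + J)\<close>, and \<open>det (I + J) = d + 1\<close>. Hence
  \<open>(d + 1)(\<ell>/2)\<^sup>d = (det W)\<^sup>2\<close>; for even \<open>d\<close> the factor \<open>(\<ell>/2)\<^sup>d\<close> is itself a nonzero
  square and can be divided out.\<close>

lemma two_neq_zero_if_CHAR_neq_2:
  assumes "CHAR('a::field) \<noteq> 2"
  shows "(2::'a) \<noteq> 0"
proof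
  assume "(2::'a) = 0"
  then have "CHAR('a) dvd 2"
    using of_nat_eq_0_iff_char_dvd[of 2, where 'a='a] by simp
  then have "CHAR('a) \<in> {1, 2}"
    using dvd_imp_le[of "CHAR('a)" 2] by (cases "CHAR('a)") (auto simp: numeral_2_eq_2 less_Suc_eq)
  with assms show False by simp
qed

lemma polarization_sum:
  fixes a b :: "nat \<Rightarrow> 'a::comm_ring_1"
  shows "2 * (\<Sum>k<d. a k * b k) = (\<Sum>k<d. (a k)^2) + (\<Sum>k<d. (b k)^2) - (\<Sum>k<d. (a k - b k)^2)"
  by (simp add: sum_distrib_left sum.distrib[symmetric] sum_subtractf[symmetric]
      power2_eq_square algebra_simps)

lemma det_mult_transpose_self:
  assumes "A \<in> carrier_mat n n"
  shows "det (A * transpose_mat A) = det A ^ 2"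
  using assms by (simp add: det_mult[of A n "transpose_mat A"] det_transpose power2_eq_square)

lemma is_square_if_mult_even_power:
  fixes c s :: "'a::field"
  assumes "is_square (c * s ^ (2 * m))" and "s \<noteq> 0"
  shows "is_square c"
proof -
  obtain t where "c * s ^ (2 * m) = t ^ 2"
    using assms(1) unfolding is_square_def by blast
  then have "c = (t / s ^ m) ^ 2"
    using assms(2) by (simp add: power_divide power_mult[symmetric] mult.commute field_simps)
  then show ?thesis
    unfolding is_square_def by blast
qed

definition simplex_gram_mat :: "nat \<Rightarrow> 'a::comm_ring_1 mat" where
  "simplex_gram_mat n = mat n n (\<lambda>(i, j). if i = j then 2 else 1)"

lemma sum_simplex_gram_mul_lower_ones:
  fixes i j n :: nat
  assumes "i < n"
  shows "(\<Sum>k<n. (if i = k then 2 else 1) * (if j \<le> k then 1 else 0) :: 'a::comm_ring_1)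
     = of_nat (n - j) + (if j \<le> i then 1 else 0)"
proof -
  have "(\<Sum>k<n. (if i = k then 2 else 1) * (if j \<le> k then 1 else 0) :: 'a)
      = (\<Sum>k<n. if j \<le> k then 1 else 0) + (\<Sum>k<n. if k = i then (if j \<le> k then 1 else 0) else 0)"
    unfolding sum.distrib[symmetric] by (rule sum.cong) auto
  also have "(\<Sum>k<n. if j \<le> k then 1 else 0 :: 'a) = of_nat (card {j..<n})"
    by (simp add: sum.If_cases Int_def atLeastLessThan_def lessThan_def conj_commute)
  finally show ?thesis
    using assms by (simp add: sum.delta)
qed

lemma sum_lower_bidiagonal_mul:
  fixes X :: "nat \<Rightarrow> 'a::comm_ring_1"
  assumes "i < n"
  shows "(\<Sum>k<n. (if i = k then 1 else if Suc k = i then -1 else 0) * X k)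
     = X i - (if i > 0 then X (i - 1) else 0)"
proof -
  have "(\<Sum>k<n. (if i = k then 1 else if Suc k = i then -1 else 0) * X k)
      = (\<Sum>k<n. if k = i then X k else 0) - (\<Sum>k<n. if k = i - 1 \<and> i > 0 then X k else 0)"
    unfolding sum_subtractf[symmetric] by (rule sum.cong) auto
  then show ?thesis
    using assms by (cases "i > 0") (simp_all add: sum.delta)
qed

text \<open>Column suffix sums (\<open>Q\<close>) followed by differences of consecutive rows (\<open>P\<close>), both
  unitriangular, reduce \<open>I + J\<close> to a triangular matrix with diagonal \<open>n + 1, 1, \<dots>, 1\<close>.\<close>

lemma det_simplex_gram_mat: "det (simplex_gram_mat n :: 'a::comm_ring_1 mat) = of_nat (n + 1)"
proof -
  define B :: "'a mat" where "B = simplex_gram_mat n"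
  define P :: "'a mat" where "P = mat n n (\<lambda>(i, j). if i = j then 1 else if Suc j = i then -1 else 0)"
  define Q :: "'a mat" where "Q = mat n n (\<lambda>(i, j). if j \<le> i then 1 else 0)"
  define T :: "'a mat" where
    "T = mat n n (\<lambda>(i, j). if i = 0 then of_nat (n - j) + (if j = 0 then 1 else 0)
                           else if i = j then 1 else 0)"
  have BQ: "B * Q = mat n n (\<lambda>(i, j). of_nat (n - j) + (if j \<le> i then 1 else 0))"
    by (rule eq_matI)
       (auto simp: B_def simplex_gram_mat_def Q_def scalar_prod_def atLeast0LessThan
         sum_simplex_gram_mul_lower_ones)
  have PBQ: "P * (B * Q) = T"
    by (rule eq_matI)
       (auto simp: BQ P_def T_def scalar_prod_def atLeast0LessThan sum_lower_bidiagonal_mul)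
  have carrier: "P \<in> carrier_mat n n" "B \<in> carrier_mat n n" "Q \<in> carrier_mat n n"
    by (auto simp: P_def B_def simplex_gram_mat_def Q_def)
  have "det P = 1"
    by (subst det_lower_triangular[OF _ carrier(1)])
       (auto simp: P_def diag_mat_def prod.list_conv_set_nth intro!: prod.neutral)
  moreover have "det Q = 1"
    by (subst det_lower_triangular[OF _ carrier(3)])
       (auto simp: Q_def diag_mat_def prod.list_conv_set_nth intro!: prod.neutral)
  moreover have "det T = of_nat (n + 1)"
  proof -
    have "det T = (\<Prod>i<n. T $$ (i, i))"
      by (subst det_upper_triangular)
         (auto simp: T_def upper_triangular_def diag_mat_def prod.list_conv_set_nth atLeast0LessThan)
    also have "\<dots> = of_nat (n + 1)"
    proof (cases n)
      case (Suc m)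
      have "(\<Prod>i<n. T $$ (i, i)) = T $$ (0, 0) * (\<Prod>i\<in>{Suc 0..<n}. T $$ (i, i))"
        using Suc by (simp add: lessThan_atLeast0 prod.atLeast_Suc_lessThan)
      also have "(\<Prod>i\<in>{Suc 0..<n}. T $$ (i, i)) = 1"
        by (rule prod.neutral) (auto simp: T_def)
      finally show ?thesis
        using Suc by (simp add: T_def)
    qed simp
    finally show ?thesis .
  qed
  moreover have "det T = det P * (det B * det Q)"
    using PBQ carrier by (metis det_mult mult_carrier_mat)
  ultimately show ?thesis
    by (simp add: B_def)
qed

definition edge_mat :: "nat \<Rightarrow> (nat \<Rightarrow> nat \<Rightarrow> 'a::comm_ring_1) \<Rightarrow> 'a mat" where
  "edge_mat d v = mat d d (\<lambda>(i, j). v (Suc i) j - v 0 j)"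

lemma edge_mat_mult_transpose_equidistant:
  fixes v :: "nat \<Rightarrow> nat \<Rightarrow> 'a::field"
  assumes "(2::'a) \<noteq> 0"
    and equi: "\<And>i j. i \<le> d \<Longrightarrow> j \<le> d \<Longrightarrow> i \<noteq> j \<Longrightarrow> sqdist d (v i) (v j) = l"
  shows "edge_mat d v * transpose_mat (edge_mat d v) = (l / 2) \<cdot>\<^sub>m simplex_gram_mat d"
proof (rule eq_matI)
  fix i j
  assume "i < dim_row ((l / 2) \<cdot>\<^sub>m simplex_gram_mat d :: 'a mat)"
    and "j < dim_col ((l / 2) \<cdot>\<^sub>m simplex_gram_mat d :: 'a mat)"
  then have i: "i < d" and j: "j < d"
    by (auto simp: simplex_gram_mat_def)
  define a where "a k = v (Suc i) k - v 0 k" for k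
  define b where "b k = v (Suc j) k - v 0 k" for k
  have "2 * (\<Sum>k<d. a k * b k) = l + l - (if i = j then 0 else l)"
    using equi[of "Suc i" 0] equi[of "Suc j" 0] equi[of "Suc i" "Suc j"] i j
    unfolding polarization_sum sqdist_def a_def b_def by simp
  then have "(\<Sum>k<d. a k * b k) = l / 2 * (if i = j then 2 else 1)"
    using assms(1) by (auto simp: field_simps)
  then show "(edge_mat d v * transpose_mat (edge_mat d v)) $$ (i, j)
      = ((l / 2) \<cdot>\<^sub>m simplex_gram_mat d) $$ (i, j)"
    using i j by (simp add: edge_mat_def simplex_gram_mat_def scalar_prod_def atLeast0LessThan a_def b_def)
qed (auto simp: edge_mat_def simplex_gram_mat_def)

theorem corollary4p4:
  fixes d :: nat and l :: "'a::field" and v :: "nat \<Rightarrow> nat \<Rightarrow> 'a"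
  assumes "CHAR('a) \<noteq> 2"
    and "d \<ge> 1"
    and "l \<noteq> 0"
    and "\<And>i j. i \<le> d \<Longrightarrow> j \<le> d \<Longrightarrow> i \<noteq> j \<Longrightarrow> sqdist d (v i) (v j) = l"
  shows "is_square (of_nat (d + 1) * (l / 2) ^ d)
     \<and> (even d \<longrightarrow> is_square (of_nat (d + 1) :: 'a))"
proof -
  have two: "(2::'a) \<noteq> 0"
    using assms(1) by (rule two_neq_zero_if_CHAR_neq_2)
  have "det (edge_mat d v) ^ 2 = (l / 2) ^ d * of_nat (d + 1)"
    using det_mult_transpose_self[of "edge_mat d v" d]
    by (simp add: edge_mat_mult_transpose_equidistant[OF two assms(4)] det_simplex_gram_mat)
      (simp add: edge_mat_def simplex_gram_mat_def)
  then have square: "is_square (of_nat (d + 1) * (l / 2) ^ d)"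
    unfolding is_square_def by (metis mult.commute)
  moreover have "is_square (of_nat (d + 1) :: 'a)" if "even d"
    using that square is_square_if_mult_even_power[of "of_nat (d + 1)" "l / 2" "d div 2"] two assms(3)
    by simp
  ultimately show ?thesis
    by blast
qed

end
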